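(* Let $\Omega=(\alpha,\beta)\subset\mathbb{R}$ with a (not necessarily uniform) subdivision $\alpha=a_0<a_1<\dots<a_n=\beta$, intervals $\mathcal{I}_k=(a_{k-1},a_k)$ and $h_k=a_k-a_{k-1}$, $k=1,\dots,n$. Let $a(x,\eta,\xi)=A(x,\eta,\xi)\xi$ and $b(x,\eta)$ satisfy the standing assumptions listed in the context (with constants $\gamma_a>0$, $K_\eta>0$, $B_\eta\ge 0$). Consider either (M) the mixed problem: $\mathcal{V}$ is the space of continuous piecewise linear functions on the subdivision vanishing at $x=\beta$, and a given number $\psi(\alpha)\in\mathbb{R}$; a subsolution is $u_1\in\mathcal{V}$ with $\int_\Omega a(x,u_1,u_1')v'+b(x,u_1)v\,dx\le \psi(\alpha)v(\alpha)$ for all $v\in\mathcal{V}^+$, and a supersolution is $u_2\in\mathcal{V}$ with $\int_\Omega a(x,u_2,u_2')v'+b(x,u_2)v\,dx\ge \psi(\alpha)v(\alpha)$ for all $v\in\mathcal{V}^+$; or (D) the Dirichlet problem: $\mathcal{V}$ is the space of continuous piecewise linear functions on the subdivision vanishing at $x=\alpha$ and $x=\beta$; a subsolution (resp. supersolution) is $u_1\in\mathcal{V}$ (resp. $u_2\in\mathcal V$) with $\int_\Omega a(x,u_1,u_1')v'+b(x,u_1)v\,dx\le 0$ (resp. $\int_\Omega a(x,u_2,u_2')v'+b(x,u_2)v\,dx\ge 0$) for all $v\in\mathcal{V}^+$, where $\mathcal{V}^+=\{v\in\mathcal{V}: v\ge 0\}$. Let $u_1$ be a subsolution and $u_2$ a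 supersolution of the same problem. If $$\max_{1\le k\le n}\left\{|u_2(a_k)-u_2(a_{k-1})|+\frac{B_\eta}{K_\eta}h_k^2\right\}<\frac{2\gamma_a}{K_\eta},$$ then $u_1\le u_2$ in $\Omega$.
   Context: Standing assumptions (with $d=1$): $A:\Omega\times\mathbb{R}\times\mathbb{R}\to\mathbb{R}$ and $b:\Omega\times\mathbb{R}\to\mathbb{R}$, $a(x,\eta,\xi)=A(x,\eta,\xi)\xi$. The functions $a(x,\eta,\xi)$ and $b(x,\eta)$ are Carathéodory functions, $C^1$ in $(\eta,\xi)$ (resp. in $\eta$) for a.e. $x\in\Omega$ and measurable in $x$ for each fixed $(\eta,\xi)$ (resp. $\eta$). There are constants $\gamma_a>0$, $K_\eta>0$, $B_\eta\ge0$ such that for a.e. $x\in\Omega$ and all $\eta\in\mathbb{R}$, $\xi\in\mathbb{R}^d$, $\zeta\in\mathbb{R}^d$: $\sum_{i,j=1}^d \frac{\partial a_i}{\partial\xi_j}(x,\eta,\xi)\zeta_i\zeta_j\ge\gamma_a|\zeta|^2$ (where $a_i=A\xi_i$); $\left|\frac{\partial A}{\partial\eta}(x,\eta,\xi)\right|\le K_\eta$; and $0\le\frac{\partial b}{\partial\eta}(x,\eta)\le B_\eta$. *)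

theory Defs
  imports "HOL-Analysis.Analysis"
begin

definition subdivision :: "(nat \<Rightarrow> real) \<Rightarrow> nat \<Rightarrow> real \<Rightarrow> real \<Rightarrow> bool" where
  "subdivision t n \<alpha> \<beta> \<longleftrightarrow> 1 \<le> n \<and> t 0 = \<alpha> \<and> t n = \<beta> \<and> (\<forall>k\<in>{1..n}. t (k - 1) < t k)"

definition pw_linear :: "(nat \<Rightarrow> real) \<Rightarrow> nat \<Rightarrow> (real \<Rightarrow> real) \<Rightarrow> bool" where
  "pw_linear t n v \<longleftrightarrow> continuous_on {t 0..t n} v \<and>
     (\<forall>k\<in>{1..n}. \<exists>c d. \<forall>x\<in>{t (k - 1)..t k}. v x = c + d * x)"

text \<open>The finite element space: vanishing at beta (mixed problem), and additionally
  at alpha when dirichlet = True (Dirichlet problem).\<close>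
definition FEspace :: "bool \<Rightarrow> (nat \<Rightarrow> real) \<Rightarrow> nat \<Rightarrow> (real \<Rightarrow> real) set" where
  "FEspace dirichlet t n = {v. pw_linear t n v \<and> v (t n) = 0 \<and> (dirichlet \<longrightarrow> v (t 0) = 0)}"

definition FEspace_plus :: "bool \<Rightarrow> (nat \<Rightarrow> real) \<Rightarrow> nat \<Rightarrow> (real \<Rightarrow> real) set" where
  "FEspace_plus dirichlet t n = {v \<in> FEspace dirichlet t n. \<forall>x\<in>{t 0..t n}. 0 \<le> v x}"

definition integrand ::
  "(real \<Rightarrow> real \<Rightarrow> real \<Rightarrow> real) \<Rightarrow> (real \<Rightarrow> real \<Rightarrow> real) \<Rightarrow> (real \<Rightarrow> real) \<Rightarrow> (real \<Rightarrow> real) \<Rightarrow> real \<Rightarrow> real" where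
  "integrand A b u v x = A x (u x) (deriv u x) * deriv u x * deriv v x + b x (u x) * v x"

definition rhs :: "bool \<Rightarrow> (nat \<Rightarrow> real) \<Rightarrow> real \<Rightarrow> (real \<Rightarrow> real) \<Rightarrow> real" where
  "rhs dirichlet t \<psi>\<alpha> v = (if dirichlet then 0 else \<psi>\<alpha> * v (t 0))"

definition subsolution where
  "subsolution dirichlet t n A b \<psi>\<alpha> u \<longleftrightarrow> u \<in> FEspace dirichlet t n \<and>
     (\<forall>v\<in>FEspace_plus dirichlet t n.
        set_integrable lborel {t 0<..<t n} (integrand A b u v) \<and>
        (LINT x:{t 0<..<t n}|lborel. integrand A b u v x) \<le> rhs dirichlet t \<psi>\<alpha> v)"

definition supersolution where
  "supersolution dirichlet t n A b \<psi>\<alpha> u \<longleftrightarrow> u \<in> FEspace dirichlet t n \<and>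
     (\<forall>v\<in>FEspace_plus dirichlet t n.
        set_integrable lborel {t 0<..<t n} (integrand A b u v) \<and>
        (LINT x:{t 0<..<t n}|lborel. integrand A b u v x) \<ge> rhs dirichlet t \<psi>\<alpha> v)"

end

theory Submission
  imports Defs
begin

text \<open>Let \<open>w i = u1 (t i) - u2 (t i)\<close>. If some \<open>w j > 0\<close>, take the maximal run \<open>p..q\<close> of
  nodes around \<open>j\<close> where \<open>w > 0\<close>, and test both inequalities with the piecewise linear function
  that is 1 at the nodes \<open>p..q\<close> and 0 at all other nodes. The right-hand sides coincide, so the
  difference of the two integrands has integral \<open>\<le> 0\<close>. Where the test function is constant this
  difference is \<open>\<ge> 0\<close> by monotonicity of \<open>b\<close>. On each of the two boundary elements \<open>w\<close> changes
  sign; with \<open>\<Delta> = |w (k - 1)| + |w k|\<close>, strong monotonicity of \<open>a\<close> in \<open>\<xi>\<close> gains \<open>\<gamma> \<Delta> / h\<^sup>2\<close>,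
  Lipschitz continuity of \<open>A\<close> in \<open>\<eta>\<close> loses \<open>K |u2'| / h\<close> times the linear interpolant of \<open>|w|\<close>,
  and the reaction term loses at most \<open>B \<Delta> / 4\<close>. The integral of this lower bound is
  \<open>\<Delta> / h (\<gamma> - K |u2 (t k) - u2 (t (k - 1))| / 2 - B h\<^sup>2 / 4)\<close>, positive under the mesh
  condition. Hence \<open>u1 \<le> u2\<close> at the nodes, and then everywhere by piecewise linearity.\<close>

section \<open>One-variable calculus and the structure conditions\<close>

lemma DERIV_lower_bound_imp_diff_ge:
  fixes f f' :: "real \<Rightarrow> real"
  assumes "x \<le> y" "\<And>z. (f has_real_derivative f' z) (at z)" "\<And>z. c \<le> f' z"
  shows "c * (y - x) \<le> f y - f x"
proof -
  have "(\<lambda>z. f z - c * z) x \<le> (\<lambda>z. f z - c * z) y"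
  proof (rule DERIV_nonneg_imp_nondecreasing[OF \<open>x \<le> y\<close>])
    fix z
    have "((\<lambda>z. f z - c * z) has_real_derivative f' z - c) (at z)"
      using assms(2) by (auto intro!: derivative_eq_intros)
    then show "\<exists>d. ((\<lambda>z. f z - c * z) has_real_derivative d) (at z) \<and> 0 \<le> d"
      using assms(3)[of z] by auto
  qed
  then show ?thesis by (simp add: algebra_simps)
qed

lemma has_derivative_pair_imp_partial_snd:
  fixes F :: "real \<Rightarrow> real \<Rightarrow> real"
  assumes "((\<lambda>p. F (fst p) (snd p)) has_derivative (\<lambda>h. D1 * fst h + D2 * snd h)) (at (\<eta>, \<xi>))"
  shows "(F \<eta> has_real_derivative D2) (at \<xi>)"
proof -
  have "((\<lambda>e. (\<eta>, e)) has_derivative (\<lambda>h. (0, h))) (at \<xi>)"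
    by (auto intro!: derivative_eq_intros)
  from has_derivative_compose[OF this assms]
  show ?thesis by (simp add: has_field_derivative_def)
qed

definition coefficient_bounds ::
  "real \<Rightarrow> real \<Rightarrow> real \<Rightarrow> (real \<Rightarrow> real \<Rightarrow> real) \<Rightarrow> (real \<Rightarrow> real) \<Rightarrow> bool" where
  "coefficient_bounds \<gamma> K B A b \<longleftrightarrow>
     (\<forall>\<eta> \<xi>1 \<xi>2. \<xi>2 \<le> \<xi>1 \<longrightarrow> \<gamma> * (\<xi>1 - \<xi>2) \<le> A \<eta> \<xi>1 * \<xi>1 - A \<eta> \<xi>2 * \<xi>2) \<and>
     (\<forall>\<eta>1 \<eta>2 \<xi>. \<bar>A \<eta>1 \<xi> - A \<eta>2 \<xi>\<bar> \<le> K * \<bar>\<eta>1 - \<eta>2\<bar>) \<and>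
     mono b \<and>
     (\<forall>\<eta>1 \<eta>2. \<eta>1 \<le> \<eta>2 \<longrightarrow> b \<eta>2 - b \<eta>1 \<le> B * (\<eta>2 - \<eta>1))"

lemma standing_assumptions_imp_coefficient_bounds:
  fixes A :: "real \<Rightarrow> real \<Rightarrow> real" and b :: "real \<Rightarrow> real"
  assumes a: "\<forall>\<eta> \<xi>. ((\<lambda>p. A (fst p) (snd p) * snd p) has_derivative
                    (\<lambda>h. a_eta \<eta> \<xi> * fst h + a_xi \<eta> \<xi> * snd h)) (at (\<eta>, \<xi>))"
    and a_xi: "\<forall>\<eta> \<xi> \<zeta>. \<gamma> * \<zeta>\<^sup>2 \<le> a_xi \<eta> \<xi> * \<zeta> * \<zeta>"
    and A_eta: "\<forall>\<eta> \<xi>. ((\<lambda>e. A e \<xi>) has_real_derivative A_eta \<eta> \<xi>) (at \<eta>) \<and> \<bar>A_eta \<eta> \<xi>\<bar> \<le> K"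
    and b: "\<forall>\<eta>. (b has_real_derivative b_eta \<eta>) (at \<eta>)"
    and b_eta: "\<forall>\<eta>. 0 \<le> b_eta \<eta> \<and> b_eta \<eta> \<le> B"
  shows "coefficient_bounds \<gamma> K B A b"
  unfolding coefficient_bounds_def
proof (intro conjI allI impI)
  fix \<eta> \<xi>1 \<xi>2 :: real
  assume "\<xi>2 \<le> \<xi>1"
  moreover have "((\<lambda>\<xi>. A \<eta> \<xi> * \<xi>) has_real_derivative a_xi \<eta> \<xi>) (at \<xi>)" for \<xi>
    using has_derivative_pair_imp_partial_snd[of "\<lambda>e f. A e f * f"] a by blast
  moreover have "\<gamma> \<le> a_xi \<eta> \<xi>" for \<xi>
    using a_xi by (metis mult_1_right power_one)
  ultimately show "\<gamma> * (\<xi>1 - \<xi>2) \<le> A \<eta> \<xi>1 * \<xi>1 - A \<eta> \<xi>2 * \<xi>2"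
    by (rule DERIV_lower_bound_imp_diff_ge)
next
  fix \<eta>1 \<eta>2 \<xi> :: real
  show "\<bar>A \<eta>1 \<xi> - A \<eta>2 \<xi>\<bar> \<le> K * \<bar>\<eta>1 - \<eta>2\<bar>"
    using field_differentiable_bound[of UNIV "\<lambda>e. A e \<xi>" "\<lambda>e. A_eta e \<xi>" K \<eta>1 \<eta>2] A_eta
    by (simp add: has_field_derivative_at_within)
next
  show "mono b"
  proof
    fix \<eta>1 \<eta>2 :: real
    assume "\<eta>1 \<le> \<eta>2"
    from DERIV_lower_bound_imp_diff_ge[OF this, of b b_eta 0] b b_eta
    show "b \<eta>1 \<le> b \<eta>2" by auto
  qed
next
  fix \<eta>1 \<eta>2 :: real
  assume "\<eta>1 \<le> \<eta>2"
  moreover have "((\<lambda>e. B * e - b e) has_real_derivative B - b_eta e) (at e)" for e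
    using b by (auto intro!: derivative_eq_intros)
  ultimately have "0 * (\<eta>2 - \<eta>1) \<le> (B * \<eta>2 - b \<eta>2) - (B * \<eta>1 - b \<eta>1)"
    using b_eta by (intro DERIV_lower_bound_imp_diff_ge) auto
  then show "b \<eta>2 - b \<eta>1 \<le> B * (\<eta>2 - \<eta>1)" by (simp add: algebra_simps)
qed

lemma flux_difference_lower_bound:
  assumes "coefficient_bounds \<gamma> K B A b" "\<sigma> = 1 \<or> \<sigma> = -1" "0 \<le> \<sigma> * (d1 - d2)"
  shows "\<gamma> * (\<sigma> * (d1 - d2)) - K * \<bar>d2\<bar> * \<bar>e1 - e2\<bar> \<le> (A e1 d1 * d1 - A e2 d2 * d2) * \<sigma>"
proof -
  have mono: "\<gamma> * (\<sigma> * (d1 - d2)) \<le> (A e1 d1 * d1 - A e1 d2 * d2) * \<sigma>"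
    using assms(2)
  proof
    assume "\<sigma> = 1"
    then show ?thesis using assms(1,3) unfolding coefficient_bounds_def by auto
  next
    assume "\<sigma> = -1"
    with assms(1,3) have "\<gamma> * (d2 - d1) \<le> A e1 d2 * d2 - A e1 d1 * d1"
      unfolding coefficient_bounds_def by auto
    then show ?thesis using \<open>\<sigma> = -1\<close> by (simp add: algebra_simps)
  qed
  have "\<bar>(A e1 d2 - A e2 d2) * d2 * \<sigma>\<bar> \<le> K * \<bar>e1 - e2\<bar> * \<bar>d2\<bar>"
    using assms(1,2) unfolding coefficient_bounds_def
    by (auto simp: abs_mult intro!: mult_right_mono)
  then have "- (K * \<bar>d2\<bar> * \<bar>e1 - e2\<bar>) \<le> (A e1 d2 - A e2 d2) * d2 * \<sigma>"
    by (simp add: abs_le_iff algebra_simps)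
  with mono show ?thesis by (simp add: algebra_simps)
qed

lemma reaction_difference_lower_bound:
  assumes "coefficient_bounds \<gamma> K B A b" "0 \<le> B" "0 \<le> s" "s \<le> 1" "0 \<le> m"
    "e2 - e1 \<le> (1 - s) * m"
  shows "- B * m / 4 \<le> (b e1 - b e2) * s"
proof (cases "e2 \<le> e1")
  case True
  then have "0 \<le> (b e1 - b e2) * s"
    using assms(1,3) unfolding coefficient_bounds_def by (simp add: monoD)
  moreover have "0 \<le> B * m" using assms(2,5) by simp
  ultimately show ?thesis by linarith
next
  case False
  then have "b e2 - b e1 \<le> B * (e2 - e1)"
    using assms(1) unfolding coefficient_bounds_def by simp
  also have "\<dots> \<le> B * ((1 - s) * m)"
    using assms(6,2) by (rule mult_left_mono)
  finally have "(b e2 - b e1) * s \<le> B * ((1 - s) * m) * s"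
    using assms(3) by (rule mult_right_mono)
  also have "\<dots> = B * m * ((1 - s) * s)" by (simp add: algebra_simps)
  also have "\<dots> \<le> B * m * (1 / 4)"
  proof (rule mult_left_mono)
    show "(1 - s) * s \<le> 1 / 4"
      using zero_le_power2[of "s - 1/2"] by (simp add: power2_eq_square algebra_simps)
  qed (use assms(2,5) in simp)
  finally show ?thesis by (simp add: algebra_simps)
qed

lemma element_pointwise_lower_bound:
  assumes cb: "coefficient_bounds \<gamma> K B A b" and "0 \<le> K" "0 \<le> B" "0 < h"
    and r: "0 \<le> r" "r \<le> 1" and "0 \<le> m" "0 \<le> m'" and \<sigma>: "\<sigma> = 1 \<or> \<sigma> = -1"
    and d: "\<sigma> * (d1 - d2) = (m + m') / h" and e: "e1 - e2 = r * m' - (1 - r) * m"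
  shows "(\<gamma> * (m + m') / h - K * \<bar>d2\<bar> * ((1 - r) * m + r * m')) / h - B * (m + m') / 4
    \<le> (A e1 d1 * d1 - A e2 d2 * d2) * (\<sigma> / h) + (b e1 - b e2) * r"
proof -
  have "\<bar>e1 - e2\<bar> \<le> (1 - r) * m + r * m'"
    using e r \<open>0 \<le> m\<close> \<open>0 \<le> m'\<close> by (simp add: abs_le_iff)
  then have "K * \<bar>d2\<bar> * \<bar>e1 - e2\<bar> \<le> K * \<bar>d2\<bar> * ((1 - r) * m + r * m')"
    using \<open>0 \<le> K\<close> by (simp add: mult_left_mono)
  moreover have "\<gamma> * (\<sigma> * (d1 - d2)) - K * \<bar>d2\<bar> * \<bar>e1 - e2\<bar> \<le> (A e1 d1 * d1 - A e2 d2 * d2) * \<sigma>"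
    using d \<open>0 < h\<close> \<open>0 \<le> m\<close> \<open>0 \<le> m'\<close> by (intro flux_difference_lower_bound[OF cb \<sigma>]) simp
  ultimately have "(\<gamma> * (m + m') / h - K * \<bar>d2\<bar> * ((1 - r) * m + r * m')) / h
      \<le> (A e1 d1 * d1 - A e2 d2 * d2) * (\<sigma> / h)"
    using d \<open>0 < h\<close> by (simp add: divide_right_mono)
  moreover have "- B * m / 4 \<le> (b e1 - b e2) * r"
    using reaction_difference_lower_bound[OF cb \<open>0 \<le> B\<close> r \<open>0 \<le> m\<close>] e r \<open>0 \<le> m'\<close>
    by (simp add: algebra_simps)
  moreover have "- B * (m + m') / 4 \<le> - B * m / 4"
    using \<open>0 \<le> B\<close> \<open>0 \<le> m'\<close> by (simp add: algebra_simps)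
  ultimately show ?thesis by linarith
qed

lemma set_integral_affine:
  fixes a b c d :: real
  assumes "a < b"
  shows "set_integrable lborel {a<..<b} (\<lambda>x. c + d * (x - a))"
    and "(LINT x:{a<..<b}|lborel. c + d * (x - a)) = (b - a) * (c + (c + d * (b - a))) / 2"
proof -
  have cont: "continuous_on {a..b} (\<lambda>x. c + d * (x - a))" by (intro continuous_intros)
  show "set_integrable lborel {a<..<b} (\<lambda>x. c + d * (x - a))"
    by (rule set_integrable_subset[OF borel_integrable_atLeastAtMost'[OF cont]]) auto
  have "(LINT x:{a<..<b}|lborel. c + d * (x - a)) = (LBINT x=a..b. c + d * (x - a))"
    using interval_lebesgue_integral_le_eq[of "ereal a" "ereal b" lborel "\<lambda>x. c + d * (x - a)"] assms
    by simp
  also have "\<dots> = (c * b + d * (b - a)\<^sup>2 / 2) - (c * a + d * (a - a)\<^sup>2 / 2)"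
  proof (rule interval_integral_FTC_finite)
    show "continuous_on {min a b..max a b} (\<lambda>x. c + d * (x - a))" by (intro continuous_intros)
    fix x
    have "((\<lambda>x. c * x + d * (x - a)\<^sup>2 / 2) has_real_derivative c + d * (x - a))
        (at x within {min a b..max a b})"
      by (auto intro!: derivative_eq_intros)
    then show "((\<lambda>x. c * x + d * (x - a)\<^sup>2 / 2) has_vector_derivative c + d * (x - a))
        (at x within {min a b..max a b})"
      by (simp add: has_real_derivative_iff_has_vector_derivative)
  qed
  also have "\<dots> = (b - a) * (c + (c + d * (b - a))) / 2"
    by (simp add: power2_eq_square field_simps)
  finally show "(LINT x:{a<..<b}|lborel. c + d * (x - a)) = (b - a) * (c + (c + d * (b - a))) / 2" .
qed

lemma set_integral_indicator_subset:
  fixes f :: "_ \<Rightarrow> real"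
  assumes "S \<subseteq> I" "set_integrable M S f"
  shows "set_integrable M I (\<lambda>x. indicator S x * f x)"
    and "(LINT x:I|M. indicator S x * f x) = (LINT x:S|M. f x)"
proof -
  have eq: "(\<lambda>x. indicator I x *\<^sub>R (indicator S x * f x)) = (\<lambda>x. indicator S x *\<^sub>R f x)"
    using assms(1) by (intro ext) (auto split: split_indicator)
  show "set_integrable M I (\<lambda>x. indicator S x * f x)"
    using assms(2) unfolding set_integrable_def eq .
  show "(LINT x:I|M. indicator S x * f x) = (LINT x:S|M. f x)"
    unfolding set_lebesgue_integral_def eq ..
qed

section \<open>Subdivisions and piecewise linear functions\<close>

lemma subdivision_less:
  assumes "subdivision t n \<alpha> \<beta>" "i < j" "j \<le> n"
  shows "t i < t j"
  using assms(2,3)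
proof (induction j)
  case (Suc j)
  then have "Suc j \<in> {1..n}" by simp
  then have "t j < t (Suc j)" using assms(1) unfolding subdivision_def by fastforce
  with Suc show ?case by (cases "i = j") auto
qed simp

lemma subdivision_le:
  assumes "subdivision t n \<alpha> \<beta>" "i \<le> j" "j \<le> n"
  shows "t i \<le> t j"
  using subdivision_less[OF assms(1) _ assms(3), of i] assms(2) by (cases "i = j") auto

lemma element_exists:
  fixes t :: "nat \<Rightarrow> real"
  assumes "t 0 < x" "x \<le> t n"
  obtains k where "k \<in> {1..n}" "t (k - 1) < x" "x \<le> t k"
proof -
  define k where "k = (LEAST k. x \<le> t k)"
  have "x \<le> t k" unfolding k_def by (rule LeastI[of _ n]) (use assms in auto)
  moreover have "k \<le> n" unfolding k_def by (rule Least_le) (use assms in auto)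
  moreover have "k \<noteq> 0" using \<open>x \<le> t k\<close> assms(1) by (cases k) auto
  moreover have "\<not> x \<le> t (k - 1)"
    unfolding k_def by (rule not_less_Least) (use \<open>k \<noteq> 0\<close> in \<open>auto simp: k_def\<close>)
  ultimately show ?thesis by (intro that[of k]) auto
qed

lemma element_unique:
  assumes "subdivision t n \<alpha> \<beta>" "k \<in> {1..n}" "l \<in> {1..n}"
    "x \<in> {t (k - 1)<..<t k}" "x \<in> {t (l - 1)<..<t l}"
  shows "k = l"
proof (rule ccontr)
  assume "k \<noteq> l"
  then consider "k \<le> l - 1" | "l \<le> k - 1" by linarith
  then show False
  proof cases
    case 1
    then have "t k \<le> t (l - 1)" using assms(3) by (intro subdivision_le[OF assms(1)]) auto
    then show False using assms(4,5) by auto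
  next
    case 2
    then have "t l \<le> t (k - 1)" using assms(2) by (intro subdivision_le[OF assms(1)]) auto
    then show False using assms(4,5) by auto
  qed
qed

lemma open_element_exists:
  assumes "subdivision t n \<alpha> \<beta>" "x \<in> {\<alpha><..<\<beta>}" "\<forall>i\<le>n. x \<noteq> t i"
  obtains k where "k \<in> {1..n}" "x \<in> {t (k - 1)<..<t k}"
proof -
  have "t 0 = \<alpha>" "t n = \<beta>" using assms(1) unfolding subdivision_def by auto
  then obtain k where "k \<in> {1..n}" "t (k - 1) < x" "x \<le> t k"
    using element_exists[of t x n] assms(2) by auto
  moreover have "x \<noteq> t k" using assms(3) \<open>k \<in> {1..n}\<close> by auto
  ultimately show ?thesis using that by auto
qed

definition barycentric_coord :: "(nat \<Rightarrow> real) \<Rightarrow> nat \<Rightarrow> real \<Rightarrow> real" where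
  "barycentric_coord t k x = (x - t (k - 1)) / (t k - t (k - 1))"

definition element_slope :: "(nat \<Rightarrow> real) \<Rightarrow> (real \<Rightarrow> real) \<Rightarrow> nat \<Rightarrow> real" where
  "element_slope t u k = (u (t k) - u (t (k - 1))) / (t k - t (k - 1))"

lemma barycentric_coord_bounds:
  assumes "t (k - 1) < t k" "x \<in> {t (k - 1)..t k}"
  shows "0 \<le> barycentric_coord t k x" "barycentric_coord t k x \<le> 1"
  using assms by (auto simp: barycentric_coord_def divide_le_eq_1)

lemma barycentric_coord_le_0:
  assumes "t (k - 1) < t k" "x \<le> t (k - 1)"
  shows "barycentric_coord t k x \<le> 0"
  using assms by (simp add: barycentric_coord_def divide_nonpos_pos)

lemma barycentric_coord_ge_1:
  assumes "t (k - 1) < t k" "t k \<le> x"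
  shows "1 \<le> barycentric_coord t k x"
  using assms by (simp add: barycentric_coord_def le_divide_eq)

lemma pw_linear_on_element:
  assumes "pw_linear t n u" "k \<in> {1..n}" "t (k - 1) < t k" "x \<in> {t (k - 1)..t k}"
  shows "u x = (1 - barycentric_coord t k x) * u (t (k - 1)) + barycentric_coord t k x * u (t k)"
proof -
  obtain c d where "\<forall>y\<in>{t (k - 1)..t k}. u y = c + d * y"
    using assms(1,2) unfolding pw_linear_def by blast
  then have u: "u (t (k - 1)) = c + d * t (k - 1)" "u (t k) = c + d * t k" "u x = c + d * x"
    using assms(3,4) by auto
  let ?s = "barycentric_coord t k x"
  have "(1 - ?s) * u (t (k - 1)) + ?s * u (t k) = c + d * t (k - 1) + d * (?s * (t k - t (k - 1)))"
    unfolding u by (simp add: algebra_simps)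
  also have "?s * (t k - t (k - 1)) = x - t (k - 1)"
    using assms(3) by (simp add: barycentric_coord_def)
  finally show ?thesis
    unfolding u by (simp add: algebra_simps)
qed

lemma pw_linear_if_interpolates:
  assumes "continuous_on {t 0..t n} v"
    and "\<And>k x. k \<in> {1..n} \<Longrightarrow> x \<in> {t (k - 1)..t k} \<Longrightarrow>
      v x = (1 - barycentric_coord t k x) * v (t (k - 1)) + barycentric_coord t k x * v (t k)"
  shows "pw_linear t n v"
  unfolding pw_linear_def
proof (intro conjI ballI assms(1))
  fix k assume "k \<in> {1..n}"
  let ?d = "element_slope t v k"
  have "v x = (v (t (k - 1)) - ?d * t (k - 1)) + ?d * x" if "x \<in> {t (k - 1)..t k}" for x
  proof -
    have "barycentric_coord t k x * (v (t k) - v (t (k - 1))) = ?d * (x - t (k - 1))"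
      by (simp add: barycentric_coord_def element_slope_def)
    then show ?thesis
      using assms(2)[OF \<open>k \<in> {1..n}\<close> that] by (simp add: algebra_simps)
  qed
  then show "\<exists>c d. \<forall>x\<in>{t (k - 1)..t k}. v x = c + d * x" by blast
qed

lemma pw_linear_deriv:
  assumes "pw_linear t n u" "k \<in> {1..n}" "t (k - 1) < t k" "x \<in> {t (k - 1)<..<t k}"
  shows "deriv u x = element_slope t u k"
proof -
  have "(u has_real_derivative element_slope t u k) (at x)"
  proof (rule has_field_derivative_transform_within_open)
    show "((\<lambda>y. (1 - barycentric_coord t k y) * u (t (k - 1)) + barycentric_coord t k y * u (t k))
        has_real_derivative element_slope t u k) (at x)"
      using assms(3) unfolding barycentric_coord_def element_slope_def
      by (auto intro!: derivative_eq_intros simp: divide_simps)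
    show "(1 - barycentric_coord t k y) * u (t (k - 1)) + barycentric_coord t k y * u (t k) = u y"
      if "y \<in> {t (k - 1)<..<t k}" for y
      using pw_linear_on_element[OF assms(1-3), of y] that by simp
  qed (use assms(4) in auto)
  then show ?thesis by (rule DERIV_imp_deriv)
qed

lemma pw_linear_diff:
  assumes "pw_linear t n u" "pw_linear t n v"
  shows "pw_linear t n (\<lambda>x. u x - v x)"
  unfolding pw_linear_def
proof (intro conjI ballI)
  show "continuous_on {t 0..t n} (\<lambda>x. u x - v x)"
    using assms unfolding pw_linear_def by (intro continuous_on_diff) auto
  fix k assume "k \<in> {1..n}"
  obtain c d where u: "\<forall>x\<in>{t (k - 1)..t k}. u x = c + d * x"
    using assms(1) \<open>k \<in> {1..n}\<close> unfolding pw_linear_def by blast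
  obtain c' d' where v: "\<forall>x\<in>{t (k - 1)..t k}. v x = c' + d' * x"
    using assms(2) \<open>k \<in> {1..n}\<close> unfolding pw_linear_def by blast
  show "\<exists>c d. \<forall>x\<in>{t (k - 1)..t k}. u x - v x = c + d * x"
    using u v by (intro exI[of _ "c - c'"] exI[of _ "d - d'"]) (simp add: algebra_simps)
qed

lemma pw_linear_nonpos_if_nonpos_at_nodes:
  assumes "subdivision t n \<alpha> \<beta>" "pw_linear t n u" "\<And>i. i \<le> n \<Longrightarrow> u (t i) \<le> 0"
    "x \<in> {\<alpha><..<\<beta>}"
  shows "u x \<le> 0"
proof -
  have "t 0 = \<alpha>" "t n = \<beta>" using assms(1) unfolding subdivision_def by auto
  then obtain k where k: "k \<in> {1..n}" "t (k - 1) < x" "x \<le> t k"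
    using element_exists[of t x n] assms(4) by auto
  let ?s = "barycentric_coord t k x"
  have "t (k - 1) < t k" using k by simp
  then have "0 \<le> ?s" "?s \<le> 1" using barycentric_coord_bounds k by auto
  moreover have "u (t (k - 1)) \<le> 0" "u (t k) \<le> 0" using assms(3) k by auto
  ultimately show ?thesis
    using pw_linear_on_element[OF assms(2) k(1) \<open>t (k - 1) < t k\<close>, of x] k
    by (simp add: add_nonpos_nonpos mult_nonneg_nonpos)
qed

section \<open>The trapezoidal test function\<close>

lemma maximal_run:
  fixes P :: "nat \<Rightarrow> bool"
  assumes "P j" "j \<le> n" "\<not> P n"
  obtains p q where "p \<le> j" "j \<le> q" "q < n" "\<forall>l\<in>{p..q}. P l"
    "0 < p \<Longrightarrow> \<not> P (p - 1)" "\<not> P (Suc q)"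
proof -
  have "\<exists>p\<le>j. (\<forall>l\<in>{p..j}. P l) \<and> (0 < p \<longrightarrow> \<not> P (p - 1))" if "P j" for j
    using that
  proof (induction j)
    case (Suc j)
    show ?case
    proof (cases "P j")
      case True
      with Suc obtain p where "p \<le> j" "\<forall>l\<in>{p..j}. P l" "0 < p \<longrightarrow> \<not> P (p - 1)" by blast
      with Suc.prems show ?thesis by (intro exI[of _ p]) (auto simp: le_Suc_eq)
    qed (use Suc.prems in auto)
  qed auto
  moreover have "\<exists>q\<ge>j. q < n \<and> (\<forall>l\<in>{j..q}. P l) \<and> \<not> P (Suc q)" if "P j" "j \<le> n" for j
    using that
  proof (induction "n - j" arbitrary: j)
    case 0
    then show ?case using assms(3) by (simp add: le_antisym)
  next
    case (Suc d)
    show ?case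
    proof (cases "P (Suc j)")
      case True
      have "d = n - Suc j" "Suc j \<le> n" using Suc.hyps(2) by simp_all
      with True obtain q where "Suc j \<le> q" "q < n" "\<forall>l\<in>{Suc j..q}. P l" "\<not> P (Suc q)"
        using Suc.hyps(1) by blast
      moreover have "{j..q} = insert j {Suc j..q}" using \<open>Suc j \<le> q\<close> by (simp add: Icc_eq_insert_lb_nat)
      ultimately show ?thesis using Suc.prems(1) by (intro exI[of _ q]) auto
    next
      case False
      then show ?thesis using Suc by (intro exI[of _ j]) auto
    qed
  qed
  ultimately obtain p q where "p \<le> j" "\<forall>l\<in>{p..j}. P l" "0 < p \<Longrightarrow> \<not> P (p - 1)"
    and "j \<le> q" "q < n" "\<forall>l\<in>{j..q}. P l" "\<not> P (Suc q)"
    using assms(1,2) by blast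
  moreover have "\<forall>l\<in>{p..q}. P l"
    using \<open>\<forall>l\<in>{p..j}. P l\<close> \<open>\<forall>l\<in>{j..q}. P l\<close> by (meson atLeastAtMost_iff nat_le_linear)
  ultimately show ?thesis using that by blast
qed

definition trapezoid :: "(nat \<Rightarrow> real) \<Rightarrow> nat \<Rightarrow> nat \<Rightarrow> real \<Rightarrow> real" where
  "trapezoid t p q x = max 0 (min 1 (min (if p = 0 then 1 else barycentric_coord t p x)
     (1 - barycentric_coord t (Suc q) x)))"

lemma trapezoid_on_element:
  assumes sd: "subdivision t n \<alpha> \<beta>" and "p \<le> q" "Suc q \<le> n" "k \<in> {1..n}"
    and x: "x \<in> {t (k - 1)..t k}"
  shows "trapezoid t p q x = (1 - barycentric_coord t k x) * indicator {p..q} (k - 1)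
    + barycentric_coord t k x * indicator {p..q} k"
proof -
  let ?L = "if p = 0 then 1 else barycentric_coord t p x" and ?R = "1 - barycentric_coord t (Suc q) x"
  let ?s = "barycentric_coord t k x"
  note le = subdivision_le[OF sd] and less = subdivision_less[OF sd]
  have s: "0 \<le> ?s" "?s \<le> 1" using barycentric_coord_bounds less x assms(4) by auto
  have L_ge: "1 \<le> ?L" if "t p \<le> x"
    using that less[of "p - 1" p] \<open>p \<le> q\<close> \<open>Suc q \<le> n\<close> by (auto intro: barycentric_coord_ge_1)
  have L_le: "?L \<le> 0" if "0 < p" "x \<le> t (p - 1)"
    using that less[of "p - 1" p] \<open>p \<le> q\<close> \<open>Suc q \<le> n\<close> by (auto intro: barycentric_coord_le_0)
  have R_ge: "1 \<le> ?R" if "x \<le> t q"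
    using that less[of q "Suc q"] \<open>Suc q \<le> n\<close> barycentric_coord_le_0[of t "Suc q" x] by auto
  have R_le: "?R \<le> 0" if "t (Suc q) \<le> x"
    using that less[of q "Suc q"] \<open>Suc q \<le> n\<close> barycentric_coord_ge_1[of t "Suc q" x] by auto
  consider "k < p" | "k = p" | "p < k \<and> k \<le> q" | "k = Suc q" | "Suc q < k" by linarith
  then show ?thesis
  proof cases
    case 1
    then have "t k \<le> t (p - 1)" using \<open>p \<le> q\<close> \<open>Suc q \<le> n\<close> by (intro le) auto
    then have "x \<le> t (p - 1)" using x by auto
    then show ?thesis using 1 L_le by (auto simp: trapezoid_def)
  next
    case 2
    then have "x \<le> t q" using x le[of p q] \<open>p \<le> q\<close> \<open>Suc q \<le> n\<close> by auto
    then show ?thesis using 2 R_ge s assms(4) \<open>p \<le> q\<close> by (auto simp: trapezoid_def)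
  next
    case 3
    then have "t p \<le> t (k - 1)" "t k \<le> t q" using \<open>Suc q \<le> n\<close> by (auto intro!: le)
    then have "t p \<le> x" "x \<le> t q" using x by auto
    moreover have "k - 1 \<in> {p..q}" "k \<in> {p..q}" using 3 by auto
    ultimately show ?thesis using L_ge R_ge by (auto simp: trapezoid_def)
  next
    case 4
    then have "t p \<le> x" using x le[of p q] \<open>p \<le> q\<close> \<open>Suc q \<le> n\<close> by auto
    moreover have "?R = 1 - ?s" using 4 by simp
    ultimately show ?thesis using 4 L_ge s \<open>p \<le> q\<close> by (auto simp: trapezoid_def)
  next
    case 5
    then have "t (Suc q) \<le> t (k - 1)" using assms(4) by (intro le) auto
    then have "t (Suc q) \<le> x" using x by auto
    moreover have "k - 1 \<notin> {p..q}" "k \<notin> {p..q}" using 5 by auto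
    ultimately show ?thesis using R_le by (auto simp: trapezoid_def)
  qed
qed

lemma trapezoid_at_node:
  assumes "subdivision t n \<alpha> \<beta>" "p \<le> q" "Suc q \<le> n" "i \<le> n"
  shows "trapezoid t p q (t i) = indicator {p..q} i"
proof (cases "i = 0")
  case True
  have "1 \<le> n" using assms(1) unfolding subdivision_def by simp
  then show ?thesis
    using trapezoid_on_element[OF assms(1-3), of 1 "t 0"] subdivision_less[OF assms(1), of 0 1] True
    by (simp add: barycentric_coord_def)
next
  case False
  then show ?thesis
    using trapezoid_on_element[OF assms(1-3), of i "t i"] subdivision_less[OF assms(1), of "i - 1" i] assms(4)
    by (simp add: barycentric_coord_def)
qed

lemma trapezoid_pw_linear:
  assumes "subdivision t n \<alpha> \<beta>" "p \<le> q" "Suc q \<le> n"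
  shows "pw_linear t n (trapezoid t p q)"
proof (rule pw_linear_if_interpolates)
  have "t (p - 1) < t p" if "0 < p"
    using subdivision_less[OF assms(1), of "p - 1" p] that assms(2,3) by simp
  moreover have "t q < t (Suc q)"
    using subdivision_less[OF assms(1), of q "Suc q"] assms(3) by simp
  ultimately show "continuous_on {t 0..t n} (trapezoid t p q)"
    unfolding trapezoid_def barycentric_coord_def by (cases "p = 0") (auto intro!: continuous_intros)
  fix k x assume "k \<in> {1..n}" "x \<in> {t (k - 1)..t k}"
  then show "trapezoid t p q x = (1 - barycentric_coord t k x) * trapezoid t p q (t (k - 1))
      + barycentric_coord t k x * trapezoid t p q (t k)"
    using trapezoid_on_element[OF assms] trapezoid_at_node[OF assms]
      subdivision_less[OF assms(1), of "k - 1" k]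
    by (simp add: barycentric_coord_def)
qed

lemma trapezoid_in_FEspace_plus:
  assumes "subdivision t n \<alpha> \<beta>" "p \<le> q" "q < n" "dirichlet \<Longrightarrow> 0 < p"
  shows "trapezoid t p q \<in> FEspace_plus dirichlet t n"
proof -
  have "trapezoid t p q (t n) = 0" "dirichlet \<Longrightarrow> trapezoid t p q (t 0) = 0"
    using trapezoid_at_node[OF assms(1,2), of n] trapezoid_at_node[OF assms(1,2), of 0] assms(3,4)
    by auto
  moreover have "0 \<le> trapezoid t p q x" for x unfolding trapezoid_def by simp
  ultimately show ?thesis
    using trapezoid_pw_linear[OF assms(1,2)] assms(3) unfolding FEspace_plus_def FEspace_def by simp
qed

section \<open>Estimates on the elements\<close>

lemma integrand_on_element:
  assumes "pw_linear t n u" "pw_linear t n v" "k \<in> {1..n}" "t (k - 1) < t k"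
    "x \<in> {t (k - 1)<..<t k}"
  shows "integrand A b u v x = A x (u x) (element_slope t u k) * element_slope t u k * element_slope t v k
    + b x (u x) * v x"
  using pw_linear_deriv[OF assms(1,3-5)] pw_linear_deriv[OF assms(2-5)] by (simp add: integrand_def)

lemma integrand_difference_nonneg:
  assumes cb: "coefficient_bounds \<gamma> K B (A x) (b x)"
    and pw: "pw_linear t n u1" "pw_linear t n u2" "pw_linear t n v"
    and k: "k \<in> {1..n}" "t (k - 1) < t k" "x \<in> {t (k - 1)<..<t k}"
    and v: "v (t (k - 1)) = v (t k)" "0 \<le> v (t k)"
    and u: "0 < v (t k) \<Longrightarrow> u2 (t (k - 1)) \<le> u1 (t (k - 1)) \<and> u2 (t k) \<le> u1 (t k)"
  shows "0 \<le> integrand A b u1 v x - integrand A b u2 v x"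
proof -
  let ?s = "barycentric_coord t k x"
  have s: "0 \<le> ?s" "?s \<le> 1" using barycentric_coord_bounds k by auto
  have "element_slope t v k = 0" using v by (simp add: element_slope_def)
  moreover have "v x = v (t k)"
    using pw_linear_on_element[OF pw(3) k(1,2), of x] k v by (simp add: algebra_simps)
  ultimately have G: "integrand A b u1 v x - integrand A b u2 v x = (b x (u1 x) - b x (u2 x)) * v (t k)"
    using integrand_on_element[OF pw(1,3) k] integrand_on_element[OF pw(2,3) k]
    by (simp add: algebra_simps)
  show ?thesis
  proof (cases "v (t k) = 0")
    case False
    with u v have "u2 (t (k - 1)) \<le> u1 (t (k - 1))" "u2 (t k) \<le> u1 (t k)" by auto
    then have "u2 x \<le> u1 x"
      using pw_linear_on_element[OF pw(1) k(1,2), of x] pw_linear_on_element[OF pw(2) k(1,2), of x] k s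
      by (simp add: add_mono mult_left_mono)
    then have "b x (u2 x) \<le> b x (u1 x)" using cb unfolding coefficient_bounds_def by (simp add: monoD)
    then show ?thesis unfolding G using v by simp
  qed (simp add: G)
qed

text \<open>Affine in \<open>x\<close>: averaging the interpolant of \<open>|u1 - u2|\<close> over the element halves the
  Lipschitz penalty, which is where the factor 2 in the mesh condition comes from.\<close>
definition element_lower_bound ::
  "real \<Rightarrow> real \<Rightarrow> real \<Rightarrow> (nat \<Rightarrow> real) \<Rightarrow> (real \<Rightarrow> real) \<Rightarrow> (real \<Rightarrow> real) \<Rightarrow> nat \<Rightarrow> real \<Rightarrow> real" where
  "element_lower_bound \<gamma> K B t u1 u2 k x =
    (let h = t k - t (k - 1); e0 = \<bar>u1 (t (k - 1)) - u2 (t (k - 1))\<bar>; e1 = \<bar>u1 (t k) - u2 (t k)\<bar>;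
         s = barycentric_coord t k x
     in (\<gamma> * (e0 + e1) / h - K * \<bar>element_slope t u2 k\<bar> * ((1 - s) * e0 + s * e1)) / h
        - B * (e0 + e1) / 4)"

lemma boundary_element_lower_bound:
  assumes cb: "coefficient_bounds \<gamma> K B (A x) (b x)" and "0 \<le> K" "0 \<le> B"
    and pw: "pw_linear t n u1" "pw_linear t n u2" "pw_linear t n v"
    and k: "k \<in> {1..n}" "t (k - 1) < t k" "x \<in> {t (k - 1)<..<t k}"
    and boundary:
      "(u1 (t (k - 1)) \<le> u2 (t (k - 1)) \<and> u2 (t k) < u1 (t k) \<and> v (t (k - 1)) = 0 \<and> v (t k) = 1) \<or>
       (u2 (t (k - 1)) < u1 (t (k - 1)) \<and> u1 (t k) \<le> u2 (t k) \<and> v (t (k - 1)) = 1 \<and> v (t k) = 0)"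
  shows "element_lower_bound \<gamma> K B t u1 u2 k x \<le> integrand A b u1 v x - integrand A b u2 v x"
proof -
  let ?h = "t k - t (k - 1)" and ?s = "barycentric_coord t k x"
  define e0 e1 where "e0 = u1 (t (k - 1)) - u2 (t (k - 1))" and "e1 = u1 (t k) - u2 (t k)"
  define d1 d2 where "d1 = element_slope t u1 k" and "d2 = element_slope t u2 k"
  have h: "0 < ?h" using k by simp
  have s: "0 \<le> ?s" "?s \<le> 1" using barycentric_coord_bounds k by auto
  have d: "d1 - d2 = (e1 - e0) / ?h"
    unfolding d1_def d2_def e0_def e1_def element_slope_def by (simp add: diff_divide_distrib)
  have e: "u1 x - u2 x = (1 - ?s) * e0 + ?s * e1"
    using pw_linear_on_element[OF pw(1) k(1,2), of x] pw_linear_on_element[OF pw(2) k(1,2), of x] k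
    unfolding e0_def e1_def by (simp add: algebra_simps)
  have G: "integrand A b u1 v x - integrand A b u2 v x
      = (A x (u1 x) d1 * d1 - A x (u2 x) d2 * d2) * element_slope t v k + (b x (u1 x) - b x (u2 x)) * v x"
    using integrand_on_element[OF pw(1,3) k] integrand_on_element[OF pw(2,3) k]
    unfolding d1_def d2_def by (simp add: algebra_simps)
  have v: "v x = (1 - ?s) * v (t (k - 1)) + ?s * v (t k)"
    using pw_linear_on_element[OF pw(3) k(1,2), of x] k by simp
  have lb: "element_lower_bound \<gamma> K B t u1 u2 k x
      = (\<gamma> * (\<bar>e0\<bar> + \<bar>e1\<bar>) / ?h - K * \<bar>d2\<bar> * ((1 - ?s) * \<bar>e0\<bar> + ?s * \<bar>e1\<bar>)) / ?h
        - B * (\<bar>e0\<bar> + \<bar>e1\<bar>) / 4"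
    unfolding element_lower_bound_def Let_def e0_def e1_def d2_def ..
  note bound = element_pointwise_lower_bound[OF cb \<open>0 \<le> K\<close> \<open>0 \<le> B\<close> h]
  from boundary show ?thesis
  proof
    assume *: "u1 (t (k - 1)) \<le> u2 (t (k - 1)) \<and> u2 (t k) < u1 (t k) \<and> v (t (k - 1)) = 0 \<and> v (t k) = 1"
    then have "\<bar>e0\<bar> = - e0" "\<bar>e1\<bar> = e1" "0 \<le> - e0" "0 \<le> e1" unfolding e0_def e1_def by auto
    moreover have "v x = ?s" "element_slope t v k = 1 / ?h" using v * by (auto simp: element_slope_def)
    moreover have "(\<gamma> * (- e0 + e1) / ?h - K * \<bar>d2\<bar> * ((1 - ?s) * - e0 + ?s * e1)) / ?h - B * (- e0 + e1) / 4
        \<le> (A x (u1 x) d1 * d1 - A x (u2 x) d2 * d2) * (1 / ?h) + (b x (u1 x) - b x (u2 x)) * ?s"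
      using d e h \<open>0 \<le> - e0\<close> \<open>0 \<le> e1\<close> by (intro bound s) (auto simp: algebra_simps)
    ultimately show ?thesis unfolding lb G by simp
  next
    assume *: "u2 (t (k - 1)) < u1 (t (k - 1)) \<and> u1 (t k) \<le> u2 (t k) \<and> v (t (k - 1)) = 1 \<and> v (t k) = 0"
    then have abs: "\<bar>e0\<bar> = e0" "\<bar>e1\<bar> = - e1" and "0 \<le> e0" "0 \<le> - e1"
      unfolding e0_def e1_def by auto
    have vx: "v x = 1 - ?s" and dv: "element_slope t v k = - 1 / ?h"
      using v * by (auto simp: element_slope_def)
    have "(\<gamma> * (- e1 + e0) / ?h - K * \<bar>d2\<bar> * ((1 - (1 - ?s)) * - e1 + (1 - ?s) * e0)) / ?h
          - B * (- e1 + e0) / 4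
        \<le> (A x (u1 x) d1 * d1 - A x (u2 x) d2 * d2) * (- 1 / ?h) + (b x (u1 x) - b x (u2 x)) * (1 - ?s)"
      using d e h s \<open>0 \<le> e0\<close> \<open>0 \<le> - e1\<close> by (intro bound) (auto simp: algebra_simps)
    moreover have "(1 - (1 - ?s)) * - e1 + (1 - ?s) * e0 = (1 - ?s) * e0 + ?s * - e1" by simp
    ultimately show ?thesis unfolding lb G abs vx dv by (simp add: add.commute)
  qed
qed

lemma element_lower_bound_integral_pos:
  assumes "t (k - 1) < t k" "0 \<le> B"
    and pos: "0 < \<bar>u1 (t (k - 1)) - u2 (t (k - 1))\<bar> + \<bar>u1 (t k) - u2 (t k)\<bar>"
    and mesh: "K * \<bar>u2 (t k) - u2 (t (k - 1))\<bar> + B * (t k - t (k - 1))\<^sup>2 < 2 * \<gamma>"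
  shows "set_integrable lborel {t (k - 1)<..<t k} (element_lower_bound \<gamma> K B t u1 u2 k)"
    and "0 < (LINT x:{t (k - 1)<..<t k}|lborel. element_lower_bound \<gamma> K B t u1 u2 k x)"
proof -
  define a h e0 e1 S where "a = t (k - 1)" and "h = t k - t (k - 1)"
    and "e0 = \<bar>u1 (t (k - 1)) - u2 (t (k - 1))\<bar>" and "e1 = \<bar>u1 (t k) - u2 (t k)\<bar>"
    and "S = \<bar>element_slope t u2 k\<bar>"
  define c d where "c = (\<gamma> * (e0 + e1) / h - K * S * e0) / h - B * (e0 + e1) / 4"
    and "d = - K * S * (e1 - e0) / h\<^sup>2"
  have h: "0 < h" using assms(1) by (simp add: h_def)
  have "element_lower_bound \<gamma> K B t u1 u2 k x
      = (\<gamma> * (e0 + e1) / h - K * S * ((1 - (x - a) / h) * e0 + (x - a) / h * e1)) / h - B * (e0 + e1) / 4"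
    for x unfolding element_lower_bound_def barycentric_coord_def Let_def a_def h_def e0_def e1_def S_def ..
  then have affine: "element_lower_bound \<gamma> K B t u1 u2 k = (\<lambda>x. c + d * (x - a))"
    using h by (intro ext) (simp add: c_def d_def field_simps power2_eq_square)
  show "set_integrable lborel {t (k - 1)<..<t k} (element_lower_bound \<gamma> K B t u1 u2 k)"
    unfolding affine using set_integral_affine(1)[OF assms(1)] by (simp add: a_def)
  have "(LINT x:{t (k - 1)<..<t k}|lborel. element_lower_bound \<gamma> K B t u1 u2 k x)
      = (LINT x:{t (k - 1)<..<t k}|lborel. c + d * (x - t (k - 1)))"
    by (simp add: affine a_def)
  also have "\<dots> = h * (c + (c + d * h)) / 2"
    using set_integral_affine(2)[OF assms(1)] by (simp add: h_def)
  also have "\<dots> = (e0 + e1) / h * (\<gamma> - K * (S * h) / 2 - B * h\<^sup>2 / 4)"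
    using h by (simp add: c_def d_def field_simps power2_eq_square)
  also have "0 < \<dots>"
  proof -
    have "S * h = \<bar>u2 (t k) - u2 (t (k - 1))\<bar>"
      using h unfolding S_def h_def element_slope_def by (simp add: abs_div)
    then have "K * (S * h) + B * h\<^sup>2 < 2 * \<gamma>" using mesh unfolding h_def by simp
    moreover have "0 \<le> B * h\<^sup>2" using \<open>0 \<le> B\<close> by simp
    ultimately have "0 < \<gamma> - K * (S * h) / 2 - B * h\<^sup>2 / 4" by linarith
    moreover have "0 < (e0 + e1) / h" using pos h unfolding e0_def e1_def by simp
    ultimately show ?thesis using mult_pos_pos by blast
  qed
  finally show "0 < (LINT x:{t (k - 1)<..<t k}|lborel. element_lower_bound \<gamma> K B t u1 u2 k x)" .
qed

lemma integrand_difference_ge_boundary_bounds: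
  fixes t :: "nat \<Rightarrow> real" and p q :: nat
  defines "v \<equiv> trapezoid t p q"
  assumes sd: "subdivision t n \<alpha> \<beta>"
    and cb: "coefficient_bounds \<gamma> K B (A x) (b x)" "0 \<le> K" "0 \<le> B"
    and pw: "pw_linear t n u1" "pw_linear t n u2"
    and run: "p \<le> q" "q < n" "\<And>l. l \<in> {p..q} \<Longrightarrow> u2 (t l) < u1 (t l)"
      "0 < p \<Longrightarrow> u1 (t (p - 1)) \<le> u2 (t (p - 1))" "u1 (t (Suc q)) \<le> u2 (t (Suc q))"
    and k: "k \<in> {1..n}" "x \<in> {t (k - 1)<..<t k}"
  shows "indicator {t (p - 1)<..<t p} x * element_lower_bound \<gamma> K B t u1 u2 p x
      + indicator {t q<..<t (Suc q)} x * element_lower_bound \<gamma> K B t u1 u2 (Suc q) x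
    \<le> integrand A b u1 v x - integrand A b u2 v x"
proof -
  have pwv: "pw_linear t n v" unfolding v_def using trapezoid_pw_linear sd run(1,2) by simp
  have node: "v (t i) = indicator {p..q} i" if "i \<le> n" for i
    unfolding v_def using trapezoid_at_node sd run(1,2) that by simp
  have hk: "t (k - 1) < t k" using k by simp
  have left: "k = p" if "x \<in> {t (p - 1)<..<t p}"
  proof -
    have "p \<noteq> 0" using that by (cases p) auto
    then show ?thesis using element_unique[OF sd k(1) _ k(2) that] run(1,2) by simp
  qed
  have right: "k = Suc q" if "x \<in> {t q<..<t (Suc q)}"
    using element_unique[OF sd k(1) _ k(2)] that run(2) by simp
  consider "k = p" | "k = Suc q" | "k \<noteq> p" "k \<noteq> Suc q" by blast
  then show ?thesis
  proof cases
    case 1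
    then have "x \<notin> {t q<..<t (Suc q)}" using right run(1) by auto
    moreover have "element_lower_bound \<gamma> K B t u1 u2 k x \<le> integrand A b u1 v x - integrand A b u2 v x"
      using 1 k run node[of "p - 1"] node[of p]
      by (intro boundary_element_lower_bound[where A = A and b = b and x = x, OF cb pw pwv _ hk]) auto
    ultimately show ?thesis using 1 k by simp
  next
    case 2
    then have "x \<notin> {t (p - 1)<..<t p}" using left run(1) by auto
    moreover have "element_lower_bound \<gamma> K B t u1 u2 k x \<le> integrand A b u1 v x - integrand A b u2 v x"
      using 2 k run node[of q] node[of "Suc q"]
      by (intro boundary_element_lower_bound[where A = A and b = b and x = x, OF cb pw pwv _ hk]) auto
    ultimately show ?thesis using 2 k by simp
  next
    case 3
    then have "x \<notin> {t (p - 1)<..<t p}" "x \<notin> {t q<..<t (Suc q)}" using left right by auto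
    moreover have "0 \<le> integrand A b u1 v x - integrand A b u2 v x"
    proof (rule integrand_difference_nonneg[where A = A and b = b and x = x, OF cb(1) pw pwv k(1) hk k(2)])
      have "k - 1 \<in> {p..q} \<longleftrightarrow> k \<in> {p..q}" using 3 k by auto
      moreover have "k - 1 \<le> n" using k(1) by auto
      ultimately show "v (t (k - 1)) = v (t k)" using node[of "k - 1"] node[of k] k by (simp add: indicator_def)
      show "0 \<le> v (t k)" using node k by simp
      show "u2 (t (k - 1)) \<le> u1 (t (k - 1)) \<and> u2 (t k) \<le> u1 (t k)" if "0 < v (t k)"
        using that node[of k] node[of "k - 1"] \<open>k - 1 \<in> {p..q} \<longleftrightarrow> k \<in> {p..q}\<close> k run(3)
        by (auto simp: less_imp_le split: split_indicator_asm)
    qed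
    ultimately show ?thesis by simp
  qed
qed

lemma integrand_difference_integral_pos:
  fixes A :: "real \<Rightarrow> real \<Rightarrow> real \<Rightarrow> real" and b :: "real \<Rightarrow> real \<Rightarrow> real"
    and t :: "nat \<Rightarrow> real" and u1 u2 :: "real \<Rightarrow> real" and p q :: nat
  defines "G \<equiv> \<lambda>x. integrand A b u1 (trapezoid t p q) x - integrand A b u2 (trapezoid t p q) x"
  assumes sd: "subdivision t n \<alpha> \<beta>" and "0 \<le> K" "0 \<le> B"
    and cb: "AE x in lborel. x \<in> {\<alpha><..<\<beta>} \<longrightarrow> coefficient_bounds \<gamma> K B (A x) (b x)"
    and pw: "pw_linear t n u1" "pw_linear t n u2"
    and mesh: "\<And>k. k \<in> {1..n} \<Longrightarrow> K * \<bar>u2 (t k) - u2 (t (k - 1))\<bar> + B * (t k - t (k - 1))\<^sup>2 < 2 * \<gamma>"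
    and run: "p \<le> q" "q < n" "\<And>l. l \<in> {p..q} \<Longrightarrow> u2 (t l) < u1 (t l)"
      "0 < p \<Longrightarrow> u1 (t (p - 1)) \<le> u2 (t (p - 1))" "u1 (t (Suc q)) \<le> u2 (t (Suc q))"
    and G_integrable: "set_integrable lborel {\<alpha><..<\<beta>} G"
  shows "0 < (LINT x:{\<alpha><..<\<beta>}|lborel. G x)"
proof -
  define IL IR where "IL = {t (p - 1)<..<t p}" and "IR = {t q<..<t (Suc q)}"
  define gL gR where "gL = element_lower_bound \<gamma> K B t u1 u2 p"
    and "gR = element_lower_bound \<gamma> K B t u1 u2 (Suc q)"
  define g where "g x = indicator IL x * gL x + indicator IR x * gR x" for x
  have t: "t 0 = \<alpha>" "t n = \<beta>" using sd unfolding subdivision_def by auto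
  note le = subdivision_le[OF sd] and less = subdivision_less[OF sd]
  have "t 0 \<le> t (p - 1)" "t p \<le> t n" "t 0 \<le> t q" "t (Suc q) \<le> t n"
    using run by (auto intro!: le)
  then have "IL \<subseteq> {\<alpha><..<\<beta>}" "IR \<subseteq> {\<alpha><..<\<beta>}"
    unfolding IL_def IR_def t[symmetric] by auto
  have "u2 (t q) < u1 (t q)" "u2 (t p) < u1 (t p)" using run by auto
  have "set_integrable lborel IR gR \<and> 0 < (LINT x:IR|lborel. gR x)"
    unfolding IR_def gR_def
    using element_lower_bound_integral_pos[of t "Suc q" B u1 u2 K \<gamma>] less[of q "Suc q"] mesh[of "Suc q"]
      \<open>u2 (t q) < u1 (t q)\<close> run(2) \<open>0 \<le> B\<close> by simp
  moreover have "set_integrable lborel IL gL \<and> 0 \<le> (LINT x:IL|lborel. gL x)"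
  proof (cases "p = 0")
    case False
    then show ?thesis
      unfolding IL_def gL_def
      using element_lower_bound_integral_pos[of t p B u1 u2 K \<gamma>] less[of "p - 1" p] mesh[of p]
        \<open>u2 (t p) < u1 (t p)\<close> run(1,2) \<open>0 \<le> B\<close> by (simp add: less_imp_le)
  qed (simp add: IL_def set_integrable_def set_lebesgue_integral_def)
  ultimately have "set_integrable lborel {\<alpha><..<\<beta>} g" "0 < (LINT x:{\<alpha><..<\<beta>}|lborel. g x)"
    using set_integral_indicator_subset[OF \<open>IL \<subseteq> _\<close>, of lborel gL]
      set_integral_indicator_subset[OF \<open>IR \<subseteq> _\<close>, of lborel gR]
    unfolding g_def by (auto simp: set_integral_add)
  moreover have "AE x in lborel. x \<in> {\<alpha><..<\<beta>} \<longrightarrow> g x \<le> G x"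
  proof -
    have "AE x in lborel. \<forall>i\<in>{..n}. x \<noteq> t i"
      by (rule AE_finite_allI) (auto intro: AE_lborel_singleton)
    then show ?thesis
      using cb
    proof eventually_elim
      case (elim x)
      show ?case
      proof
        assume "x \<in> {\<alpha><..<\<beta>}"
        then obtain k where "k \<in> {1..n}" "x \<in> {t (k - 1)<..<t k}"
          using open_element_exists[OF sd] elim(1) by auto
        then show "g x \<le> G x"
          unfolding g_def G_def IL_def IR_def gL_def gR_def
          using \<open>x \<in> {\<alpha><..<\<beta>}\<close> elim(2) \<open>0 \<le> K\<close> \<open>0 \<le> B\<close> sd pw run
          by (intro integrand_difference_ge_boundary_bounds) auto
      qed
    qed
  qed
  ultimately show ?thesis
    using set_integral_mono_AE[OF _ G_integrable, of g] by fastforce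
qed

lemma subsolution_supersolution_integral_diff_nonpos:
  assumes "subsolution dirichlet t n A b \<psi>\<alpha> u1" "supersolution dirichlet t n A b \<psi>\<alpha> u2"
    and "v \<in> FEspace_plus dirichlet t n"
  shows "set_integrable lborel {t 0<..<t n} (\<lambda>x. integrand A b u1 v x - integrand A b u2 v x)"
    and "(LINT x:{t 0<..<t n}|lborel. integrand A b u1 v x - integrand A b u2 v x) \<le> 0"
proof -
  have 1: "set_integrable lborel {t 0<..<t n} (integrand A b u1 v)"
    "(LINT x:{t 0<..<t n}|lborel. integrand A b u1 v x) \<le> rhs dirichlet t \<psi>\<alpha> v"
    using assms(1,3) unfolding subsolution_def by auto
  have 2: "set_integrable lborel {t 0<..<t n} (integrand A b u2 v)"
    "rhs dirichlet t \<psi>\<alpha> v \<le> (LINT x:{t 0<..<t n}|lborel. integrand A b u2 v x)"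
    using assms(2,3) unfolding supersolution_def by auto
  show "set_integrable lborel {t 0<..<t n} (\<lambda>x. integrand A b u1 v x - integrand A b u2 v x)"
    using set_integral_diff(1)[OF 1(1) 2(1)] .
  show "(LINT x:{t 0<..<t n}|lborel. integrand A b u1 v x - integrand A b u2 v x) \<le> 0"
    using set_integral_diff(2)[OF 1(1) 2(1)] 1(2) 2(2) by simp
qed

lemma nodal_comparison:
  assumes sd: "subdivision t n \<alpha> \<beta>" and "0 \<le> K" "0 \<le> B"
    and cb: "AE x in lborel. x \<in> {\<alpha><..<\<beta>} \<longrightarrow> coefficient_bounds \<gamma> K B (A x) (b x)"
    and sub: "subsolution dirichlet t n A b \<psi>\<alpha> u1" and super: "supersolution dirichlet t n A b \<psi>\<alpha> u2"
    and mesh: "\<And>k. k \<in> {1..n} \<Longrightarrow> K * \<bar>u2 (t k) - u2 (t (k - 1))\<bar> + B * (t k - t (k - 1))\<^sup>2 < 2 * \<gamma>"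
    and "i \<le> n"
  shows "u1 (t i) \<le> u2 (t i)"
proof (rule ccontr)
  assume "\<not> u1 (t i) \<le> u2 (t i)"
  have u1: "pw_linear t n u1" "u1 (t n) = 0" "dirichlet \<Longrightarrow> u1 (t 0) = 0"
    using sub unfolding subsolution_def FEspace_def by auto
  have u2: "pw_linear t n u2" "u2 (t n) = 0" "dirichlet \<Longrightarrow> u2 (t 0) = 0"
    using super unfolding supersolution_def FEspace_def by auto
  have "u2 (t i) < u1 (t i)" "\<not> u2 (t n) < u1 (t n)"
    using \<open>\<not> u1 (t i) \<le> u2 (t i)\<close> u1(2) u2(2) by auto
  obtain p q where run: "p \<le> i" "i \<le> q" "q < n" "\<forall>l\<in>{p..q}. u2 (t l) < u1 (t l)"
    "0 < p \<Longrightarrow> \<not> u2 (t (p - 1)) < u1 (t (p - 1))" "\<not> u2 (t (Suc q)) < u1 (t (Suc q))"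
    using \<open>u2 (t i) < u1 (t i)\<close> \<open>i \<le> n\<close> \<open>\<not> u2 (t n) < u1 (t n)\<close>
    by (rule maximal_run[where P = "\<lambda>l. u2 (t l) < u1 (t l)"]) blast
  have "p \<le> q" using run(1,2) by simp
  have "dirichlet \<Longrightarrow> 0 < p" using bspec[OF run(4), of p] \<open>p \<le> q\<close> u1(3) u2(3) by (cases "p = 0") auto
  then have v: "trapezoid t p q \<in> FEspace_plus dirichlet t n"
    using trapezoid_in_FEspace_plus[OF sd \<open>p \<le> q\<close> run(3)] by blast
  have t: "t 0 = \<alpha>" "t n = \<beta>" using sd unfolding subdivision_def by auto
  have "0 < (LINT x:{\<alpha><..<\<beta>}|lborel.
      integrand A b u1 (trapezoid t p q) x - integrand A b u2 (trapezoid t p q) x)"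
    using \<open>p \<le> q\<close> run subsolution_supersolution_integral_diff_nonpos(1)[OF sub super v] t
    by (intro integrand_difference_integral_pos[OF sd \<open>0 \<le> K\<close> \<open>0 \<le> B\<close> cb u1(1) u2(1) mesh]) auto
  then show False using subsolution_supersolution_integral_diff_nonpos(2)[OF sub super v] t by simp
qed

theorem theorem3p1:
  fixes A :: "real \<Rightarrow> real \<Rightarrow> real \<Rightarrow> real" and b :: "real \<Rightarrow> real \<Rightarrow> real"
    and a_eta a_xi A_eta :: "real \<Rightarrow> real \<Rightarrow> real \<Rightarrow> real" and b_eta :: "real \<Rightarrow> real \<Rightarrow> real"
    and \<gamma>a K\<eta> B\<eta> \<alpha> \<beta> \<psi>\<alpha> :: real and t :: "nat \<Rightarrow> real" and n :: nat
    and dirichlet :: bool and u1 u2 :: "real \<Rightarrow> real"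
  assumes subdiv: "subdivision t n \<alpha> \<beta>"
    and constants: "\<gamma>a > 0" "K\<eta> > 0" "B\<eta> \<ge> 0"
    and meas_a: "\<And>\<eta> \<xi>. (\<lambda>x. A x \<eta> \<xi> * \<xi>) \<in> borel_measurable (restrict_space lborel {\<alpha><..<\<beta>})"
    and meas_b: "\<And>\<eta>. (\<lambda>x. b x \<eta>) \<in> borel_measurable (restrict_space lborel {\<alpha><..<\<beta>})"
    and reg: "AE x in lborel. x \<in> {\<alpha><..<\<beta>} \<longrightarrow>
         (\<forall>\<eta> \<xi>. ((\<lambda>p. A x (fst p) (snd p) * snd p) has_derivative
                    (\<lambda>h. a_eta x \<eta> \<xi> * fst h + a_xi x \<eta> \<xi> * snd h)) (at (\<eta>, \<xi>)))
       \<and> continuous_on UNIV (\<lambda>p. a_eta x (fst p) (snd p))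
       \<and> continuous_on UNIV (\<lambda>p. a_xi x (fst p) (snd p))
       \<and> (\<forall>\<eta>. ((\<lambda>e. b x e) has_real_derivative b_eta x \<eta>) (at \<eta>))
       \<and> continuous_on UNIV (b_eta x)
       \<and> (\<forall>\<eta> \<xi> \<zeta>. a_xi x \<eta> \<xi> * \<zeta> * \<zeta> \<ge> \<gamma>a * \<zeta>\<^sup>2)
       \<and> (\<forall>\<eta> \<xi>. ((\<lambda>e. A x e \<xi>) has_real_derivative A_eta x \<eta> \<xi>) (at \<eta>)
                 \<and> \<bar>A_eta x \<eta> \<xi>\<bar> \<le> K\<eta>)
       \<and> (\<forall>\<eta>. 0 \<le> b_eta x \<eta> \<and> b_eta x \<eta> \<le> B\<eta>)"
    and sub: "subsolution dirichlet t n A b \<psi>\<alpha> u1"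
    and super: "supersolution dirichlet t n A b \<psi>\<alpha> u2"
    and mesh: "Max ((\<lambda>k. \<bar>u2 (t k) - u2 (t (k - 1))\<bar> + B\<eta> / K\<eta> * (t k - t (k - 1))\<^sup>2) ` {1..n})
               < 2 * \<gamma>a / K\<eta>"
  shows "\<forall>x\<in>{\<alpha><..<\<beta>}. u1 x \<le> u2 x"
proof -
  have cb: "AE x in lborel. x \<in> {\<alpha><..<\<beta>} \<longrightarrow> coefficient_bounds \<gamma>a K\<eta> B\<eta> (A x) (b x)"
    using reg by eventually_elim (blast intro: standing_assumptions_imp_coefficient_bounds)
  have mesh_k: "K\<eta> * \<bar>u2 (t k) - u2 (t (k - 1))\<bar> + B\<eta> * (t k - t (k - 1))\<^sup>2 < 2 * \<gamma>a"
    if "k \<in> {1..n}" for k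
  proof -
    have "\<bar>u2 (t k) - u2 (t (k - 1))\<bar> + B\<eta> / K\<eta> * (t k - t (k - 1))\<^sup>2 < 2 * \<gamma>a / K\<eta>"
      using mesh that by (meson Max_ge finite_atLeastAtMost finite_imageI image_eqI le_less_trans)
    then have "K\<eta> * (\<bar>u2 (t k) - u2 (t (k - 1))\<bar> + B\<eta> / K\<eta> * (t k - t (k - 1))\<^sup>2) < K\<eta> * (2 * \<gamma>a / K\<eta>)"
      using constants(2) by (rule mult_strict_left_mono)
    then show ?thesis using constants(2) by (simp add: algebra_simps)
  qed
  have "u1 (t i) - u2 (t i) \<le> 0" if "i \<le> n" for i
    using nodal_comparison[OF subdiv _ constants(3) cb sub super mesh_k that] constants(2) by simp
  moreover have "pw_linear t n u1" "pw_linear t n u2"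
    using sub super unfolding subsolution_def supersolution_def FEspace_def by auto
  ultimately show ?thesis
    using pw_linear_nonpos_if_nonpos_at_nodes[OF subdiv pw_linear_diff] by fastforce
qed

end
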